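(* Let $H$ be a graph with $n$ vertices and at least $n+2$ edges. Then $H$ contains a cycle of length at most $\frac{n}{2}+1$.
   Context: Graphs may contain loops and parallel edges; a loop is a cycle of length 1 and two parallel edges form a cycle of length 2. *)

theory Defs
  imports Complex_Main
begin

text \<open>A finite multigraph: vertex set V, edge set E (edges are abstract
objects, so parallel edges are allowed), and each edge has a set of one
(a loop) or two endpoints in V.\<close>
definition multigraph :: "'a set \<Rightarrow> 'e set \<Rightarrow> ('e \<Rightarrow> 'a set) \<Rightarrow> bool" where
  "multigraph V E ends \<longleftrightarrow> finite V \<and> finite E \<and>
     (\<forall>e\<in>E. ends e \<subseteq> V \<and> (card (ends e) = 1 \<or> card (ends e) = 2))"

text \<open>A cycle of length k: distinct vertices v_0..v_(k-1) and distinct edges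
e_0..e_(k-1) with e_i joining v_i and v_((i+1) mod k). For k = 1 this is a
loop, for k = 2 a pair of parallel edges.\<close>
definition has_cycle_of_length :: "'a set \<Rightarrow> 'e set \<Rightarrow> ('e \<Rightarrow> 'a set) \<Rightarrow> nat \<Rightarrow> bool" where
  "has_cycle_of_length V E ends k \<longleftrightarrow> k \<ge> 1 \<and>
     (\<exists>vs es. length vs = k \<and> length es = k \<and> distinct vs \<and> distinct es \<and>
        set vs \<subseteq> V \<and> set es \<subseteq> E \<and>
        (\<forall>i<k. ends (es ! i) = {vs ! i, vs ! ((i + 1) mod k)}))"

end

theory Submission
  imports Defs
begin

text \<open>We prove a weighted strengthening by induction on \<open>|V| + |E|\<close>: if \<open>|E| \<ge> |V| + j\<close>
with \<open>j \<le> 2\<close>, then for every weighting \<open>w\<close> of the edges by naturals some cycle \<open>C\<close> satisfies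
\<open>(j + 2) w(C) \<le> 2 w(E)\<close>; the theorem is the case of unit weights on \<open>n + 2\<close> of the edges.
Surplus edges are deleted. A loop or a pair of parallel edges satisfies the bound unless one of
its edges \<open>e\<close> is heavy, \<open>w(E) \<le> (j + 2) w(e)\<close>; then the statement for \<open>j - 1\<close> applied after
deleting \<open>e\<close> gives the bound. In a simple graph a vertex of degree at most one is deleted, and
one of degree two is suppressed by merging its two edges into one edge carrying their total
weight, so that cycles lift with the same weight. What remains is a simple graph of minimum
degree three with \<open>3|V| \<le> 2|E| \<le> 2|V| + 4\<close>, which forces \<open>K\<^sub>4\<close> and \<open>j = 2\<close>; one of its four
triangles carries at most half the weight, since every edge lies in exactly two of them.\<close>

definition is_cycle :: "'a set \<Rightarrow> 'e set \<Rightarrow> ('e \<Rightarrow> 'a set) \<Rightarrow> 'a list \<Rightarrow> 'e list \<Rightarrow> bool" where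
  "is_cycle V E ends vs es \<longleftrightarrow> length vs = length es \<and> es \<noteq> [] \<and> distinct vs \<and> distinct es \<and>
     set vs \<subseteq> V \<and> set es \<subseteq> E \<and>
     (\<forall>i<length es. ends (es ! i) = {vs ! i, vs ! ((i + 1) mod length es)})"

lemma has_cycle_of_length_if_is_cycle:
  "is_cycle V E ends vs es \<Longrightarrow> has_cycle_of_length V E ends (length es)"
  unfolding is_cycle_def has_cycle_of_length_def by (metis length_greater_0_conv less_eq_Suc_le One_nat_def)

lemma is_cycle_mono:
  assumes "is_cycle V' E' ends' vs es" "V' \<subseteq> V" "E' \<subseteq> E" "\<And>e. e \<in> set es \<Longrightarrow> ends e = ends' e"
  shows "is_cycle V E ends vs es"
  using assms unfolding is_cycle_def by (auto simp: subset_iff nth_mem)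

lemma is_cycle_loop: "e \<in> E \<Longrightarrow> v \<in> V \<Longrightarrow> ends e = {v} \<Longrightarrow> is_cycle V E ends [v] [e]"
  unfolding is_cycle_def by auto

lemma is_cycle_parallel:
  assumes "e \<in> E" "f \<in> E" "e \<noteq> f" "x \<in> V" "y \<in> V" "x \<noteq> y" "ends e = {x, y}" "ends f = {x, y}"
  shows "is_cycle V E ends [x, y] [e, f]"
  using assms unfolding is_cycle_def by (auto simp: less_Suc_eq insert_commute)

lemma is_cycle_triangle:
  assumes "{e, f, g} \<subseteq> E" "{a, b, c} \<subseteq> V" "distinct [a, b, c]"
    "ends e = {a, b}" "ends f = {b, c}" "ends g = {c, a}"
  shows "is_cycle V E ends [a, b, c] [e, f, g]"
proof -
  have "distinct [e, f, g]"
    using assms(3-6) by (auto simp: doubleton_eq_iff)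
  then show ?thesis
    using assms unfolding is_cycle_def by (auto simp: less_Suc_eq)
qed

lemma is_cycle_rotate:
  assumes "is_cycle V E ends vs es"
  shows "is_cycle V E ends (rotate r vs) (rotate r es)"
proof -
  let ?k = "length es"
  have k: "length vs = ?k" "?k > 0" and
    adj: "\<And>i. i < ?k \<Longrightarrow> ends (es ! i) = {vs ! i, vs ! ((i + 1) mod ?k)}"
    using assms by (auto simp: is_cycle_def)
  have "ends (rotate r es ! i) = {rotate r vs ! i, rotate r vs ! ((i + 1) mod ?k)}" if "i < ?k" for i
  proof -
    have "((i + r) mod ?k + 1) mod ?k = ((i + 1) mod ?k + r) mod ?k"
      by (simp add: mod_simps algebra_simps)
    then show ?thesis
      using adj[of "(i + r) mod ?k"] that k by (simp add: nth_rotate add.commute)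
  qed
  then show ?thesis using assms k unfolding is_cycle_def by simp
qed

lemma is_cycle_last_edge:
  assumes "is_cycle V E ends vs (es @ [e])"
  shows "ends e = {last vs, hd vs}"
proof -
  have "length vs = Suc (length es)" "vs \<noteq> []" using assms by (auto simp: is_cycle_def)
  then show ?thesis
    using assms unfolding is_cycle_def
    by (auto simp: last_conv_nth hd_conv_nth elim!: allE[of _ "length es"])
qed

lemma is_cycle_rotate_to_last:
  assumes "is_cycle V E ends vs es" "e \<in> set es"
  obtains vs' es' where "is_cycle V E ends vs' (es' @ [e])" "set es = insert e (set es')"
proof -
  obtain i where i: "i < length es" "es ! i = e" using assms(2) by (metis in_set_conv_nth)
  let ?es = "rotate (Suc i) es"
  have rot: "is_cycle V E ends (rotate (Suc i) vs) ?es" using assms(1) by (rule is_cycle_rotate)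
  have "?es ! (length es - 1) = es ! ((Suc i + (length es - 1)) mod length es)"
    by (rule nth_rotate) (use i in simp)
  also have "Suc i + (length es - 1) = i + length es"
    using i by linarith
  also have "es ! ((i + length es) mod length es) = e"
    using i by simp
  finally have "last ?es = e" by (subst last_conv_nth) (use i in auto)
  then have es: "?es = butlast ?es @ [e]"
    using i by (metis append_butlast_last_id length_rotate list.size(3) not_less_zero)
  have "set es = insert e (set (butlast ?es))"
    using arg_cong[OF es, of set] by simp
  with rot es show ?thesis using that by metis
qed

lemma is_cycle_subdivide_last:
  assumes cyc: "is_cycle V' E' ends' vs (es @ [e])"
    and sub: "V' \<subseteq> V" "E' \<subseteq> E" and agree: "\<And>f. f \<in> set es \<Longrightarrow> ends f = ends' f"
    and v: "v \<in> V" "v \<notin> set vs"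
    and new: "ea \<in> E" "eb \<in> E" "ea \<noteq> eb" "ea \<notin> set es" "eb \<notin> set es"
    and ea: "ends ea = {last vs, v}" and eb: "ends eb = {v, hd vs}"
  shows "is_cycle V E ends (vs @ [v]) (es @ [ea, eb])"
proof -
  let ?k = "length es"
  have len: "length vs = Suc ?k" and vs: "vs \<noteq> []"
    and adj: "\<And>i. i < Suc ?k \<Longrightarrow> ends' ((es @ [e]) ! i) = {vs ! i, vs ! ((i + 1) mod Suc ?k)}"
    using cyc by (auto simp: is_cycle_def)
  have "ends ((es @ [ea, eb]) ! i) = {(vs @ [v]) ! i, (vs @ [v]) ! ((i + 1) mod (?k + 2))}"
    if i: "i < ?k + 2" for i
  proof -
    consider "i < ?k" | "i = ?k" | "i = Suc ?k" using i by linarith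
    then show ?thesis
    proof cases
      case 1
      then have "ends (es ! i) = {vs ! i, vs ! (i + 1)}"
        using adj[of i] agree[of "es ! i"] by (simp add: nth_append)
      then show ?thesis using 1 len by (simp add: nth_append)
    next
      case 2
      then show ?thesis using ea len vs by (simp add: nth_append last_conv_nth)
    next
      case 3
      then show ?thesis using eb len vs by (simp add: nth_append hd_conv_nth insert_commute)
    qed
  qed
  then show ?thesis
    using cyc sub v new len unfolding is_cycle_def by (auto simp: numeral_2_eq_2)
qed

lemma is_cycle_unsuppress:
  assumes v: "v \<in> V" and e12: "e1 \<in> E" "e2 \<in> E" "e1 \<noteq> e2"
    and ends12: "ends e1 = {v, u}" "ends e2 = {v, x}"
    and cyc: "is_cycle (V - {v}) (E - {e2}) (ends(e1 := {u, x})) vs es"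
  obtains vs' es' where "is_cycle V E ends vs' es'"
    "set es' = (if e1 \<in> set es then insert e2 (set es) else set es)"
proof (cases "e1 \<in> set es")
  case False
  have "is_cycle V E ends vs es"
    by (rule is_cycle_mono[OF cyc]) (use False in auto)
  with False that show ?thesis by simp
next
  case True
  obtain ws fs where cyc': "is_cycle (V - {v}) (E - {e2}) (ends(e1 := {u, x})) ws (fs @ [e1])"
    and set_es: "set es = insert e1 (set fs)"
    using is_cycle_rotate_to_last[OF cyc True] .
  have ux: "{u, x} = {last ws, hd ws}"
    using is_cycle_last_edge[OF cyc'] by simp
  have fs: "e1 \<notin> set fs" "e2 \<notin> set fs" and v_new: "v \<notin> set ws"
    using cyc' by (auto simp: is_cycle_def)
  have lift: "is_cycle V E ends (ws @ [v]) (fs @ [ea, eb])"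
    if "{ea, eb} = {e1, e2}" "ends ea = {last ws, v}" "ends eb = {v, hd ws}" for ea eb
    by (rule is_cycle_subdivide_last[OF cyc' _ _ _ v v_new])
      (use that e12 fs in \<open>auto simp: doubleton_eq_iff\<close>)
  have "set (fs @ [ea, eb]) = insert e2 (set es)" if "{ea, eb} = {e1, e2}" for ea eb
    using that set_es by auto
  moreover have "is_cycle V E ends (ws @ [v]) (fs @ [e1, e2]) \<or>
      is_cycle V E ends (ws @ [v]) (fs @ [e2, e1])"
    using ux lift[of e1 e2] lift[of e2 e1] ends12 by (auto simp: doubleton_eq_iff insert_commute)
  ultimately show ?thesis
    using that True by (metis insert_commute)
qed

definition degree :: "'e set \<Rightarrow> ('e \<Rightarrow> 'a set) \<Rightarrow> 'a \<Rightarrow> nat" where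
  "degree E ends v = card {e\<in>E. v \<in> ends e}"

definition simple_graph :: "'a set \<Rightarrow> 'e set \<Rightarrow> ('e \<Rightarrow> 'a set) \<Rightarrow> bool" where
  "simple_graph V E ends \<longleftrightarrow> multigraph V E ends \<and> (\<forall>e\<in>E. card (ends e) = 2) \<and> inj_on ends E"

lemma multigraph_subset_edges: "multigraph V E ends \<Longrightarrow> E' \<subseteq> E \<Longrightarrow> multigraph V E' ends"
  unfolding multigraph_def by (auto intro: finite_subset)

lemma multigraph_delete_vertex:
  "multigraph V E ends \<Longrightarrow> E' \<subseteq> E \<Longrightarrow> \<forall>e\<in>E'. v \<notin> ends e \<Longrightarrow> multigraph (V - {v}) E' ends"
  unfolding multigraph_def by (auto intro: finite_subset)

lemma multigraph_suppress_vertex: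
  assumes mg: "multigraph V E ends" and incident: "{e\<in>E. v \<in> ends e} = {e1, e2}"
    and uxV: "u \<in> V - {v}" "x \<in> V - {v}" "u \<noteq> x"
  shows "multigraph (V - {v}) (E - {e2}) (ends(e1 := {u, x}))"
  using mg incident uxV unfolding multigraph_def by (auto simp: subset_iff)

lemma card_vertices_ge_card_ends: "multigraph V E ends \<Longrightarrow> e \<in> E \<Longrightarrow> card (ends e) \<le> card V"
  unfolding multigraph_def by (auto intro: card_mono)

lemma short_cycle_or_simple:
  assumes mg: "multigraph V E ends"
  shows "(\<exists>vs es. is_cycle V E ends vs es \<and> length es \<le> 2) \<or> simple_graph V E ends"
proof (cases "\<exists>e\<in>E. card (ends e) = 1")
  case True
  then obtain e v where "e \<in> E" "ends e = {v}" by (metis card_1_singletonE)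
  then have "is_cycle V E ends [v] [e]"
    using mg by (intro is_cycle_loop) (auto simp: multigraph_def)
  then show ?thesis by fastforce
next
  case no_loop: False
  show ?thesis
  proof (cases "inj_on ends E")
    case False
    then obtain e f where ef: "e \<in> E" "f \<in> E" "e \<noteq> f" "ends e = ends f"
      by (auto simp: inj_on_def)
    then obtain x y where "ends e = {x, y}" "x \<noteq> y"
      using mg no_loop by (metis card_2_iff multigraph_def)
    then have "is_cycle V E ends [x, y] [e, f]"
      using mg ef by (intro is_cycle_parallel) (auto simp: multigraph_def)
    then show ?thesis by fastforce
  qed (use mg no_loop in \<open>auto simp: simple_graph_def multigraph_def\<close>)
qed

lemma sum_incident_weights:
  assumes "multigraph V E ends"
  shows "(\<Sum>v\<in>V. sum w {e\<in>E. v \<in> ends e}) = (\<Sum>e\<in>E. of_nat (card (ends e)) * w e)"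
proof -
  have fin: "finite V" "finite E" and sub: "\<And>e. e \<in> E \<Longrightarrow> ends e \<subseteq> V"
    using assms by (auto simp: multigraph_def)
  have "(\<Sum>v\<in>V. sum w {e\<in>E. v \<in> ends e}) = (\<Sum>v\<in>V. \<Sum>e\<in>E. if v \<in> ends e then w e else 0)"
    using fin by (simp add: sum.inter_filter)
  also have "\<dots> = (\<Sum>e\<in>E. \<Sum>v\<in>V. if v \<in> ends e then w e else 0)"
    by (rule sum.swap)
  also have "\<dots> = (\<Sum>e\<in>E. of_nat (card (ends e)) * w e)"
  proof (rule sum.cong)
    fix e assume "e \<in> E"
    then have "{v\<in>V. v \<in> ends e} = ends e" using sub by auto
    then show "(\<Sum>v\<in>V. if v \<in> ends e then w e else 0) = of_nat (card (ends e)) * w e"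
      using fin by (simp add: sum.inter_filter[symmetric])
  qed simp
  finally show ?thesis .
qed

lemma sum_degree_simple_graph:
  "simple_graph V E ends \<Longrightarrow> (\<Sum>v\<in>V. degree E ends v) = 2 * card E"
  using sum_incident_weights[of V E ends "\<lambda>_. 1 :: nat"]
  by (simp add: simple_graph_def degree_def)

lemma sum_avoiding_weights_simple_graph:
  fixes w :: "'e \<Rightarrow> nat"
  assumes "simple_graph V E ends"
  shows "(\<Sum>d\<in>V. sum w {e\<in>E. d \<notin> ends e}) + 2 * sum w E = card V * sum w E"
proof -
  have fin: "finite E" using assms by (simp add: simple_graph_def multigraph_def)
  have "sum w {e\<in>E. d \<notin> ends e} + sum w {e\<in>E. d \<in> ends e} = sum w E" for d
    using fin by (subst sum.union_disjoint[symmetric]) (auto intro: sum.cong)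
  then have "(\<Sum>d\<in>V. sum w {e\<in>E. d \<notin> ends e}) + (\<Sum>d\<in>V. sum w {e\<in>E. d \<in> ends e}) =
      card V * sum w E"
    by (simp add: sum.distrib[symmetric])
  moreover have "(\<Sum>d\<in>V. sum w {e\<in>E. d \<in> ends e}) = 2 * sum w E"
    using assms sum_incident_weights[of V E ends w]
    by (simp add: simple_graph_def sum_distrib_left)
  ultimately show ?thesis by simp
qed

lemma ends_incident_subset:
  assumes "simple_graph V E ends"
  shows "ends ` {e\<in>E. v \<in> ends e} \<subseteq> (\<lambda>u. {v, u}) ` (V - {v})"
proof
  fix S assume "S \<in> ends ` {e\<in>E. v \<in> ends e}"
  then obtain e where e: "e \<in> E" "v \<in> ends e" "S = ends e" by blast
  then obtain x y where "ends e = {x, y}" "x \<noteq> y" "ends e \<subseteq> V"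
    using assms by (metis card_2_iff simple_graph_def multigraph_def)
  then show "S \<in> (\<lambda>u. {v, u}) ` (V - {v})"
    using e by (auto simp: insert_commute)
qed

lemma card_ends_incident:
  "simple_graph V E ends \<Longrightarrow> card (ends ` {e\<in>E. v \<in> ends e}) = degree E ends v"
  unfolding simple_graph_def degree_def by (auto intro: card_image inj_on_subset)

lemma degree_le_simple_graph:
  assumes "simple_graph V E ends"
  shows "degree E ends v \<le> card (V - {v})"
proof -
  have "finite V" using assms by (simp add: simple_graph_def multigraph_def)
  then have "card (ends ` {e\<in>E. v \<in> ends e}) \<le> card ((\<lambda>u. {v, u}) ` (V - {v}))"
    by (intro card_mono ends_incident_subset[OF assms]) simp
  then have "degree E ends v \<le> card ((\<lambda>u. {v, u}) ` (V - {v}))"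
    by (simp add: card_ends_incident[OF assms])
  also have "\<dots> \<le> card (V - {v})" by (rule card_image_le) (use \<open>finite V\<close> in simp)
  finally show ?thesis .
qed

lemma adjacent_if_full_degree:
  assumes simple: "simple_graph V E ends" and deg: "card (V - {v}) \<le> degree E ends v"
    and u: "u \<in> V" "u \<noteq> v"
  shows "\<exists>e\<in>E. ends e = {v, u}"
proof -
  let ?N = "(\<lambda>u. {v, u}) ` (V - {v})"
  have "finite V" using simple by (simp add: simple_graph_def multigraph_def)
  then have fin: "finite ?N" and "card ?N \<le> card (V - {v})"
    by (simp_all add: card_image_le)
  then have "card ?N \<le> card (ends ` {e\<in>E. v \<in> ends e})"
    using deg card_ends_incident[OF simple, of v] by linarith
  then have "ends ` {e\<in>E. v \<in> ends e} = ?N"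
    using card_seteq[OF fin ends_incident_subset[OF simple]] by blast
  moreover have "{v, u} \<in> ?N" using u by blast
  ultimately have "{v, u} \<in> ends ` {e\<in>E. v \<in> ends e}" by simp
  then show ?thesis by force
qed

lemma card_vertices_simple_graph_min_degree_3:
  assumes simple: "simple_graph V E ends" and deg: "\<forall>v\<in>V. 3 \<le> degree E ends v" and "V \<noteq> {}"
  shows "4 \<le> card V" "3 * card V \<le> 2 * card E"
proof -
  have fin: "finite V" using simple by (simp add: simple_graph_def multigraph_def)
  obtain v where "v \<in> V" using \<open>V \<noteq> {}\<close> by blast
  then show "4 \<le> card V"
    using deg degree_le_simple_graph[OF simple, of v] fin by fastforce
  have "(\<Sum>v\<in>V. 3) \<le> (\<Sum>v\<in>V. degree E ends v)"
    using deg by (intro sum_mono) auto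
  then show "3 * card V \<le> 2 * card E" using sum_degree_simple_graph[OF simple] by simp
qed

lemma triangle_avoiding_vertex:
  assumes simple: "simple_graph V E ends" and cV: "card V = 4"
    and deg: "\<forall>v\<in>V. 3 \<le> degree E ends v" and d: "d \<in> V"
  obtains vs es where "is_cycle V E ends vs es" "set es = {e\<in>E. d \<notin> ends e}"
proof -
  have fin: "finite V" and ends: "\<And>e. e \<in> E \<Longrightarrow> ends e \<subseteq> V \<and> card (ends e) = 2"
    and inj: "inj_on ends E"
    using simple by (auto simp: simple_graph_def multigraph_def)
  have "card (V - {d}) = 3" using cV d fin by simp
  then obtain a b c where abc: "V - {d} = {a, b, c}" "distinct [a, b, c]"
    by (auto simp: card_3_iff)
  have adj: "\<exists>e\<in>E. ends e = {x, y}" if "x \<in> V" "y \<in> V" "x \<noteq> y" for x y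
    using adjacent_if_full_degree[OF simple _ that(2)] that deg cV fin by simp
  have inV: "a \<in> V" "b \<in> V" "c \<in> V" using abc(1) by auto
  obtain eab ebc eca where edges: "{eab, ebc, eca} \<subseteq> E"
    "ends eab = {a, b}" "ends ebc = {b, c}" "ends eca = {c, a}"
    using adj[OF inV(1,2)] adj[OF inV(2,3)] adj[OF inV(3,1)] abc(2) by auto
  have "is_cycle V E ends [a, b, c] [eab, ebc, eca]"
    using edges abc by (intro is_cycle_triangle) auto
  moreover have "set [eab, ebc, eca] = {e\<in>E. d \<notin> ends e}"
  proof
    show "set [eab, ebc, eca] \<subseteq> {e\<in>E. d \<notin> ends e}" using edges abc by auto
  next
    show "{e\<in>E. d \<notin> ends e} \<subseteq> set [eab, ebc, eca]"
    proof
      fix e assume e: "e \<in> {e\<in>E. d \<notin> ends e}"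
      then have "ends e \<subseteq> {a, b, c}" "card (ends e) = 2" using ends abc(1) by auto
      then obtain x y where xy: "ends e = {x, y}" "x \<noteq> y" "{x, y} \<subseteq> {a, b, c}"
        by (auto simp: card_2_iff)
      then have "ends e \<in> ends ` {eab, ebc, eca}"
        using edges by (auto simp: doubleton_eq_iff)
      then have "e \<in> {eab, ebc, eca}"
        using inj_on_image_mem_iff[OF inj, of e "{eab, ebc, eca}"] e edges by blast
      then show "e \<in> set [eab, ebc, eca]" by simp
    qed
  qed
  ultimately show ?thesis using that by blast
qed

definition has_light_cycle :: "nat \<Rightarrow> 'a set \<Rightarrow> 'e set \<Rightarrow> ('e \<Rightarrow> 'a set) \<Rightarrow> ('e \<Rightarrow> nat) \<Rightarrow> bool" where
  "has_light_cycle j V E ends w \<longleftrightarrow>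
     (\<exists>vs es. is_cycle V E ends vs es \<and> (j + 2) * sum w (set es) \<le> 2 * sum w E)"

lemma has_light_cycle_mono:
  assumes "has_light_cycle j V' E' ends' w" "V' \<subseteq> V" "E' \<subseteq> E" "finite E"
    "\<And>e. e \<in> E' \<Longrightarrow> ends e = ends' e"
  shows "has_light_cycle j V E ends w"
proof -
  obtain vs es where cyc: "is_cycle V' E' ends' vs es" and light: "(j + 2) * sum w (set es) \<le> 2 * sum w E'"
    using assms(1) by (auto simp: has_light_cycle_def)
  have "is_cycle V E ends vs es"
    by (rule is_cycle_mono[OF cyc assms(2,3)]) (use cyc assms(5) in \<open>auto simp: is_cycle_def\<close>)
  moreover have "sum w E' \<le> sum w E" by (rule sum_mono2) (use assms(3,4) in auto)
  ultimately show ?thesis using light unfolding has_light_cycle_def by (meson le_trans mult_le_mono2)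
qed

lemma has_light_cycle_heavy_edge:
  assumes light: "has_light_cycle (j - 1) V (E - {e}) ends w" and "0 < j"
    and e: "e \<in> E" "finite E" and heavy: "sum w E \<le> (j + 2) * w e"
  shows "has_light_cycle j V E ends w"
proof -
  obtain vs es where cyc: "is_cycle V (E - {e}) ends vs es"
    and "(j + 1) * sum w (set es) \<le> 2 * sum w (E - {e})"
    using light \<open>0 < j\<close> by (auto simp: has_light_cycle_def)
  moreover define c R where "c = sum w (set es)" and "R = sum w (E - {e})"
  ultimately have c: "(j + 1) * c \<le> 2 * R" by simp
  have W: "sum w E = w e + R" using e by (simp add: R_def sum.remove)
  then have R: "R \<le> (j + 1) * w e" using heavy by simp
  have "(j + 1) * ((j + 2) * c) = (j + 2) * ((j + 1) * c)"
    by (rule mult.left_commute)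
  also have "\<dots> \<le> (j + 2) * (2 * R)" using c by (rule mult_le_mono2)
  also have "\<dots> = (j + 1) * (2 * R) + 2 * R" by (simp add: algebra_simps)
  also have "\<dots> \<le> (j + 1) * (2 * R) + (j + 1) * (2 * w e)" using R by simp
  also have "\<dots> = (j + 1) * (2 * (w e + R))" by (simp add: algebra_simps)
  finally have "(j + 2) * c \<le> 2 * (w e + R)" by (rule mult_le_cancel1[THEN iffD1, rule_format]) simp
  then have "(j + 2) * c \<le> 2 * sum w E" using W by simp
  moreover have "is_cycle V E ends vs es" by (rule is_cycle_mono[OF cyc]) auto
  ultimately show ?thesis unfolding has_light_cycle_def c_def by blast
qed

lemma light_cycle_or_heavy_edge_if_short_cycle:
  fixes w :: "'e \<Rightarrow> nat"
  assumes cyc: "is_cycle V E ends vs es" and short: "length es \<le> 2" and fin: "finite E"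
  shows "has_light_cycle j V E ends w \<or> (0 < j \<and> (\<exists>e\<in>E. sum w E \<le> (j + 2) * w e))"
proof (cases "(j + 2) * sum w (set es) \<le> 2 * sum w E")
  case True
  then show ?thesis using cyc by (auto simp: has_light_cycle_def)
next
  case False
  have es: "set es \<subseteq> E" "set es \<noteq> {}" using cyc by (auto simp: is_cycle_def)
  then have "sum w (set es) \<le> sum w E" using fin by (intro sum_mono2) auto
  with False have "0 < j" by (cases j) auto
  have "Max (w ` set es) \<in> w ` set es" using es(2) by (intro Max_in) auto
  then obtain e where e: "e \<in> set es" "w e = Max (w ` set es)" by (metis imageE)
  have "sum w (set es) \<le> of_nat (card (set es)) * w e"
    by (rule sum_bounded_above) (auto simp: e(2))
  also have "\<dots> \<le> 2 * w e" using short card_length[of es] by simp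
  finally have "(j + 2) * sum w (set es) \<le> (j + 2) * (2 * w e)" by (rule mult_le_mono2)
  with False have "sum w E \<le> (j + 2) * w e" by (simp add: mult.left_commute)
  then show ?thesis using \<open>0 < j\<close> e(1) es(1) by blast
qed

lemma has_light_cycle_if_short_cycle:
  fixes w :: "'e \<Rightarrow> nat"
  assumes cyc: "is_cycle V E ends vs es" and short: "length es \<le> 2" and fin: "finite E"
    and delete: "\<And>e. 0 < j \<Longrightarrow> e \<in> E \<Longrightarrow> has_light_cycle (j - 1) V (E - {e}) ends w"
  shows "has_light_cycle j V E ends w"
  using light_cycle_or_heavy_edge_if_short_cycle[OF cyc short fin, of j w]
    has_light_cycle_heavy_edge[OF delete _ _ fin] by blast

lemma has_light_cycle_unsuppress:
  fixes w :: "'e \<Rightarrow> nat"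
  assumes v: "v \<in> V" and e12: "e1 \<in> E" "e2 \<in> E" "e1 \<noteq> e2" and fin: "finite E"
    and ends12: "ends e1 = {v, u}" "ends e2 = {v, x}"
    and light: "has_light_cycle j (V - {v}) (E - {e2}) (ends(e1 := {u, x})) (w(e1 := w e1 + w e2))"
  shows "has_light_cycle j V E ends w"
proof -
  let ?w = "w(e1 := w e1 + w e2)"
  have merged: "sum ?w A = sum w (if e1 \<in> A then insert e2 A else A)" if "finite A" "e2 \<notin> A" for A
  proof (cases "e1 \<in> A")
    case True
    then have "sum ?w A = w e1 + w e2 + sum w (A - {e1})"
      using that by (simp add: sum.remove)
    also have "\<dots> = sum w (insert e2 A)"
      using that True by (simp add: sum.remove)
    finally show ?thesis using True by simp
  qed (auto intro: sum.cong)
  obtain vs es where cyc: "is_cycle (V - {v}) (E - {e2}) (ends(e1 := {u, x})) vs es"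
    and c: "(j + 2) * sum ?w (set es) \<le> 2 * sum ?w (E - {e2})"
    using light by (auto simp: has_light_cycle_def)
  obtain vs' es' where cyc': "is_cycle V E ends vs' es'"
    and es': "set es' = (if e1 \<in> set es then insert e2 (set es) else set es)"
    using is_cycle_unsuppress[OF v e12(1-3) ends12 cyc] .
  have "e2 \<notin> set es" using cyc by (auto simp: is_cycle_def)
  then have "sum ?w (set es) = sum w (set es')" using es' merged by simp
  moreover have "sum ?w (E - {e2}) = sum w E"
    using merged[of "E - {e2}"] e12 fin by (simp add: insert_absorb)
  ultimately show ?thesis using cyc' c by (auto simp: has_light_cycle_def)
qed

lemma has_light_cycle_K4:
  fixes w :: "'e \<Rightarrow> nat"
  assumes simple: "simple_graph V E ends" and cV: "card V = 4"
    and deg: "\<forall>v\<in>V. 3 \<le> degree E ends v"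
  shows "has_light_cycle 2 V E ends w"
proof -
  define T where "T d = sum w {e\<in>E. d \<notin> ends e}" for d
  have fin: "finite V" "V \<noteq> {}"
    using simple cV by (auto simp: simple_graph_def multigraph_def)
  define d where "d = arg_min_on T V"
  have d: "d \<in> V" "\<And>x. x \<in> V \<Longrightarrow> T d \<le> T x"
    using arg_min_if_finite[OF fin, of T] by (auto simp: d_def not_less)
  have "4 * T d = (\<Sum>x\<in>V. T d)" using cV by simp
  also have "\<dots> \<le> (\<Sum>x\<in>V. T x)" using d(2) by (rule sum_mono)
  also have "\<dots> = 2 * sum w E"
    using sum_avoiding_weights_simple_graph[OF simple, of w] cV by (simp add: T_def)
  finally have light: "4 * T d \<le> 2 * sum w E" .
  obtain vs es where cyc: "is_cycle V E ends vs es" and es: "set es = {e\<in>E. d \<notin> ends e}"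
    using triangle_avoiding_vertex[OF simple cV deg d(1)] .
  have "(2 + 2) * sum w (set es) \<le> 2 * sum w E" using light by (simp add: es T_def)
  then show ?thesis using cyc unfolding has_light_cycle_def by blast
qed

lemma has_light_cycle_if_min_degree_3:
  fixes w :: "'e \<Rightarrow> nat"
  assumes simple: "simple_graph V E ends" and deg: "\<forall>v\<in>V. 3 \<le> degree E ends v"
    and "V \<noteq> {}" "j \<le> 2" "card E \<le> card V + j"
  shows "has_light_cycle j V E ends w"
proof -
  have "4 \<le> card V" "3 * card V \<le> 2 * card E"
    using card_vertices_simple_graph_min_degree_3[OF simple deg \<open>V \<noteq> {}\<close>] by auto
  then have "card V = 4" "j = 2" using assms(4,5) by linarith+
  then show ?thesis using has_light_cycle_K4[OF simple _ deg] by simp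
qed

lemma low_degree_vertex_reduction:
  fixes w :: "'e \<Rightarrow> nat"
  assumes simple: "simple_graph V E ends" and v: "v \<in> V" "degree E ends v \<le> 2"
  obtains E' ends' w' where "multigraph (V - {v}) E' ends'" "E' \<subseteq> E" "card E \<le> Suc (card E')"
    "\<And>j. has_light_cycle j (V - {v}) E' ends' w' \<Longrightarrow> has_light_cycle j V E ends w"
proof -
  have mg: "multigraph V E ends" and fin: "finite E" and inj: "inj_on ends E"
    using simple by (auto simp: simple_graph_def multigraph_def)
  let ?D = "{e\<in>E. v \<in> ends e}"
  consider "card ?D \<le> 1" | "card ?D = 2" using v(2) by (force simp: degree_def)
  then show ?thesis
  proof cases
    case 1
    have "multigraph (V - {v}) (E - ?D) ends" using mg by (rule multigraph_delete_vertex) auto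
    moreover have "card E \<le> Suc (card (E - ?D))"
      using 1 fin by (simp add: card_Diff_subset)
    moreover have "has_light_cycle j V E ends w" if "has_light_cycle j (V - {v}) (E - ?D) ends w" for j
      using that by (rule has_light_cycle_mono) (use fin in auto)
    ultimately show ?thesis using that by blast
  next
    case 2
    then obtain e1 e2 where D: "?D = {e1, e2}" "e1 \<noteq> e2" by (auto simp: card_2_iff)
    then have "ends e1 \<in> (\<lambda>u. {v, u}) ` (V - {v})" "ends e2 \<in> (\<lambda>u. {v, u}) ` (V - {v})"
      using ends_incident_subset[OF simple, of v] by auto
    then obtain u x where ux: "u \<in> V - {v}" "x \<in> V - {v}" "ends e1 = {v, u}" "ends e2 = {v, x}"
      by blast
    have e12: "e1 \<in> E" "e2 \<in> E" using D by auto
    have "u \<noteq> x" using inj_onD[OF inj _ e12] D(2) ux by auto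
    then have "multigraph (V - {v}) (E - {e2}) (ends(e1 := {u, x}))"
      using mg D(1) ux by (intro multigraph_suppress_vertex)
    moreover have "card E \<le> Suc (card (E - {e2}))" using fin e12 by simp
    moreover have "has_light_cycle j V E ends w" if
      "has_light_cycle j (V - {v}) (E - {e2}) (ends(e1 := {u, x})) (w(e1 := w e1 + w e2))" for j
      using has_light_cycle_unsuppress[OF v(1) e12 D(2) fin ux(3,4) that] .
    ultimately show ?thesis using that by blast
  qed
qed

lemma has_light_cycle_if_card_edges_ge:
  fixes w :: "'e \<Rightarrow> nat"
  assumes "j \<le> 2" "multigraph V E ends" "card V + j \<le> card E" "E \<noteq> {}"
  shows "has_light_cycle j V E ends w"
  using assms
proof (induction "card V + card E" arbitrary: V E ends w j rule: less_induct)
  case less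
  note IH = less.hyps and j = less.prems(1) and mg = less.prems(2)
    and card_E = less.prems(3) and nonempty = less.prems(4)
  have fin: "finite V" "finite E" using mg by (auto simp: multigraph_def)
  obtain e0 where e0: "e0 \<in> E" using nonempty by blast
  moreover have "1 \<le> card (ends e0)" using mg e0 by (auto simp: multigraph_def)
  ultimately have "1 \<le> card V" using card_vertices_ge_card_ends[OF mg] by (meson le_trans)
  have delete_edge: "has_light_cycle j' V (E - {e}) ends w"
    if "e \<in> E" "j' \<le> 2" "card V + j' < card E" for e j'
  proof (rule IH)
    show "card V + card (E - {e}) < card V + card E" using that fin by (simp add: card_gt_0_iff)
    have "card (E - {e}) = card E - 1" using that fin by simp
    then show "E - {e} \<noteq> {}" using that \<open>1 \<le> card V\<close> by (intro notI) simp
  qed (use that mg fin in \<open>auto intro: multigraph_subset_edges\<close>)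
  show ?case
  proof (cases "card V + j < card E")
    case True
    then show ?thesis
      by (rule has_light_cycle_mono[OF delete_edge[OF e0 j]]) (use fin in auto)
  next
    case False
    then have tight: "card E = card V + j" using card_E by simp
    consider (short) vs es where "is_cycle V E ends vs es" "length es \<le> 2"
      | (low_degree) v where "simple_graph V E ends" "v \<in> V" "degree E ends v \<le> 2"
      | (cubic) "simple_graph V E ends" "\<forall>v\<in>V. 3 \<le> degree E ends v"
    proof -
      have "3 \<le> degree E ends v" if "\<not> degree E ends v \<le> 2" for v using that by linarith
      then show ?thesis using that short_cycle_or_simple[OF mg] by blast
    qed
    then show ?thesis
    proof cases
      case short
      show ?thesis
        by (rule has_light_cycle_if_short_cycle[OF short fin(2)])
          (use delete_edge j tight \<open>1 \<le> card V\<close> in auto)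
    next
      case low_degree
      obtain E' ends' w' where E': "multigraph (V - {v}) E' ends'" "E' \<subseteq> E"
        "card E \<le> Suc (card E')"
        and lift: "\<And>j. has_light_cycle j (V - {v}) E' ends' w' \<Longrightarrow> has_light_cycle j V E ends w"
        using low_degree_vertex_reduction[OF low_degree, where w = w] by blast
      show ?thesis
      proof (rule lift, rule IH)
        show "card (V - {v}) + card E' < card V + card E"
          using low_degree(2) fin \<open>1 \<le> card V\<close> card_mono[OF fin(2) E'(2)] by simp
        have "2 \<le> card V" using low_degree e0 card_vertices_ge_card_ends[OF mg e0]
          by (simp add: simple_graph_def)
        then show "card (V - {v}) + j \<le> card E'" "E' \<noteq> {}"
          using low_degree(2) fin card_E E'(3) by auto
      qed (use j E'(1) in auto)
    next
      case cubic
      have "V \<noteq> {}" using \<open>1 \<le> card V\<close> by (intro notI) simp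
      with cubic show ?thesis using j tight by (intro has_light_cycle_if_min_degree_3) auto
    qed
  qed
qed

theorem lemma3p3:
  fixes V :: "'a set" and E :: "'e set" and ends :: "'e \<Rightarrow> 'a set" and n :: nat
  assumes "multigraph V E ends"
    and "card V = n"
    and "card E \<ge> n + 2"
  shows "\<exists>k. has_cycle_of_length V E ends k \<and> real k \<le> real n / 2 + 1"
proof -
  obtain E0 where E0: "E0 \<subseteq> E" "card E0 = n + 2"
    using obtain_subset_with_card_n[OF assms(3)] by metis
  have "has_light_cycle 2 V E0 ends (\<lambda>_. 1)"
    by (rule has_light_cycle_if_card_edges_ge)
      (use multigraph_subset_edges[OF assms(1) E0(1)] assms(2) E0(2) in auto)
  then obtain vs es where cyc: "is_cycle V E0 ends vs es" and "4 * card (set es) \<le> 2 * (n + 2)"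
    by (auto simp: has_light_cycle_def E0(2))
  moreover have "card (set es) = length es"
    using cyc by (simp add: is_cycle_def distinct_card)
  ultimately have "real (length es) \<le> real n / 2 + 1" by simp
  moreover have "is_cycle V E ends vs es" by (rule is_cycle_mono[OF cyc _ E0(1)]) auto
  ultimately show ?thesis using has_cycle_of_length_if_is_cycle by blast
qed

end
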